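(* In the Popularity Adjusted Block Model described in the context, suppose $\operatorname{rank}(\boldsymbol\Theta)=K^2$, and let $\boldsymbol\Xi=(\xi_{iu})\in\mathbb R^{n\times K^2}$ be a matrix whose columns are orthonormal eigenvectors of $\boldsymbol\Theta$ corresponding to its $K^2$ nonzero eigenvalues. For $k\in[K]$ let $\boldsymbol\Xi^{(k)}=(\xi_{iu})_{i:\boldsymbol c^\ast(i)=k,\,u\in[K^2]}$ and $\boldsymbol\Lambda^{(k,\cdot)}=(\lambda_{il})_{i:\boldsymbol c^\ast(i)=k,\,l\in[K]}$. Then for each $k\in[K]$, $$\boldsymbol\Xi^{(k)}=\boldsymbol\Lambda^{(k,\cdot)}\boldsymbol Z_k,$$ where $\boldsymbol Z_k\in\mathbb R^{K\times K^2}$ satisfies $\boldsymbol Z_k\boldsymbol Z_l^\top=\boldsymbol 0_{K\times K}$ for each $l\ne k$ and $\boldsymbol Z_k\boldsymbol Z_k^\top=(\boldsymbol\Lambda^{(k,\cdot)\top}\boldsymbol\Lambda^{(k,\cdot)})^{-1}$.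
   Context: Notation: $[m]=\{1,\dots,m\}$. Popularity Adjusted Block Model: integers $n$, $K\ge2$, a community label vector $\boldsymbol c^\ast\in[K]^n$, a popularity matrix $\boldsymbol\Lambda=(\lambda_{ik})\in[0,1]^{n\times K}$. The edge probability matrix is $\boldsymbol\Theta=(\theta_{ij})_{n\times n}$ with $\theta_{ij}=\lambda_{i\boldsymbol c^\ast(j)}\lambda_{j\boldsymbol c^\ast(i)}$ for all $i,j\in[n]$ (a symmetric matrix). Submatrices indexed by "$i:\boldsymbol c^\ast(i)=k$" keep the rows $i$ with $\boldsymbol c^\ast(i)=k$ in increasing order of $i$. *)

theory Defs
  imports "Jordan_Normal_Form.DL_Rank" "Jordan_Normal_Form.DL_Submatrix" "Jordan_Normal_Form.Char_Poly"
begin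

text \<open>Conventions: indices are 0-based, so [n] becomes {0..<n} and [K] becomes {0..<K}.
  The PABM edge probability matrix built from labels c and popularity matrix Lam.\<close>

definition pabm_Theta :: "nat \<Rightarrow> (nat \<Rightarrow> nat) \<Rightarrow> real mat \<Rightarrow> real mat" where
  "pabm_Theta n c Lam = mat n n (\<lambda>(i,j). Lam $$ (i, c j) * Lam $$ (j, c i))"

definition mat_rank :: "nat \<Rightarrow> real mat \<Rightarrow> nat" where
  "mat_rank n A = vec_space.rank n A"

end

theory Submission
  imports Defs
begin

text \<open>Let A be the n \<times> K^2 matrix whose row i carries row i of \<Lambda> in the column block c(i),
  the column a K + b standing for the pair (a, b). Then \<Theta> = A B for a K^2 \<times> n matrix B, so every
  eigenvector of \<Theta> with a nonzero eigenvalue lies in the column space of A: \<Xi> = A W with W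
  square. Orthonormality of \<Xi> then says that W W^T is the inverse of A^T A. The latter is block
  diagonal with diagonal blocks \<Lambda>_k^T \<Lambda>_k, where \<Lambda>_k consists of the rows of \<Lambda> in community
  k, and the inverse of a block diagonal matrix is block diagonal with the inverted blocks. Taking
  for Z_k the k-th block of K rows of W gives \<Xi>_k = \<Lambda>_k Z_k, and Z_k Z_l^T is the (k, l) block
  of W W^T.\<close>

lemma index_mult_mat_lessThan:
  assumes "A \<in> carrier_mat a b" "B \<in> carrier_mat b d" "i < a" "j < d"
  shows "(A*B) $$ (i,j) = (\<Sum>v<b. A$$(i,v) * B$$(v,j))"
  using assms by (simp add: scalar_prod_def atLeast0LessThan)

subsection \<open>Submatrices formed by a set of rows\<close>

lemma pick_atLeast0LessThan:
  assumes "j < M"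
  shows "pick {0..<M} j = j"
proof -
  have "{a \<in> {0..<M}. a < j} = {0..<j}" using assms by auto
  then show ?thesis using pick_card_in_set[of j "{0..<M}"] assms by simp
qed

lemma pick_in_bounded_set:
  assumes "r < card {i. i<n \<and> i\<in>S}"
  shows "pick S r < n" "pick S r \<in> S"
  using pick_in_set_le[OF assms] pick_reduce_set[OF assms] by auto

lemma sum_pick:
  "(\<Sum>r<card {i. i<n \<and> i\<in>S}. f (pick S r)) = (\<Sum>i | i<n \<and> i\<in>S. f i)"
proof -
  let ?S = "{i. i<n \<and> i\<in>S}"
  have "strict_mono_on {..<card ?S} (pick ?S)"
    by (intro strict_mono_onI) (auto intro: pick_mono_le)
  then have inj: "inj_on (pick ?S) {..<card ?S}" by (rule strict_mono_on_imp_inj_on)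
  have "pick ?S ` {..<card ?S} \<subseteq> ?S" using pick_in_set_le[of _ ?S] by auto
  then have img: "pick ?S ` {..<card ?S} = ?S"
    by (rule card_subset_eq[rotated]) (auto simp: card_image[OF inj])
  have "\<And>r. r < card ?S \<Longrightarrow> pick S r = pick ?S r" by (rule pick_reduce_set)
  then have "(\<Sum>r<card ?S. f (pick S r)) = (\<Sum>r<card ?S. f (pick ?S r))" by simp
  also have "\<dots> = (\<Sum>i\<in>?S. f i)"
    using sum.reindex[OF inj, of f] img by simp
  finally show ?thesis .
qed

lemma card_bounded_atLeast0LessThan: "card {j. j < m \<and> j \<in> {0..<m}} = m"
proof -
  have "{j. j < m \<and> j \<in> {0..<m}} = {0..<m}" by auto
  then show ?thesis by simp
qed

lemma submatrix_rows_carrier: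
  assumes "X \<in> carrier_mat n m"
  shows "submatrix X I {0..<m} \<in> carrier_mat (card {i. i<n \<and> i\<in>I}) m"
proof -
  have dims: "dim_row X = n" "dim_col X = m" using assms by auto
  show ?thesis
    by (rule carrier_matI) (simp_all only: dim_submatrix dims card_bounded_atLeast0LessThan)
qed

lemma submatrix_rows_index:
  assumes X: "X \<in> carrier_mat n m" and r: "r < card {i. i<n \<and> i\<in>I}" and u: "u < m"
  shows "submatrix X I {0..<m} $$ (r,u) = X $$ (pick I r, u)"
proof -
  have "dim_row X = n" "dim_col X = m" using X by auto
  then have "submatrix X I {0..<m} $$ (r,u) = X $$ (pick I r, pick {0..<m} u)"
    using r u by (intro submatrix_index) (simp_all only: card_bounded_atLeast0LessThan)
  then show ?thesis using u by (simp only: pick_atLeast0LessThan)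
qed

lemma submatrix_rows_gram_index:
  assumes L: "L \<in> carrier_mat n K" and l: "l < K" and l': "l' < K"
  shows "((submatrix L I {0..<K})\<^sup>T * submatrix L I {0..<K}) $$ (l,l')
       = (\<Sum>i | i<n \<and> i\<in>I. L$$(i,l) * L$$(i,l'))"
proof -
  let ?m = "card {i. i<n \<and> i\<in>I}"
  let ?L = "submatrix L I {0..<K}"
  have LI: "?L \<in> carrier_mat ?m K" by (rule submatrix_rows_carrier[OF L])
  have "(?L\<^sup>T * ?L) $$ (l,l') = (\<Sum>r<?m. ?L\<^sup>T $$ (l,r) * ?L $$ (r,l'))"
    by (rule index_mult_mat_lessThan[OF transpose_carrier_mat[THEN iffD2, OF LI] LI l l'])
  also have "\<dots> = (\<Sum>r<?m. L $$ (pick I r, l) * L $$ (pick I r, l'))"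
  proof (rule sum.cong[OF refl])
    fix r assume "r \<in> {..<?m}"
    then have r: "r < ?m" by simp
    have "?L\<^sup>T $$ (l,r) = ?L $$ (r,l)" using LI r l by simp
    then show "?L\<^sup>T $$ (l,r) * ?L $$ (r,l') = L $$ (pick I r, l) * L $$ (pick I r, l')"
      by (simp only: submatrix_rows_index[OF L r l] submatrix_rows_index[OF L r l'])
  qed
  also have "\<dots> = (\<Sum>i | i<n \<and> i\<in>I. L$$(i,l) * L$$(i,l'))" by (rule sum_pick)
  finally show ?thesis .
qed

subsection \<open>Eigenvectors of a product and Gram matrices\<close>

lemma nonzero_eigenvectors_factor_left:
  fixes A :: "'a::field mat"
  assumes A: "A \<in> carrier_mat n N" and B: "B \<in> carrier_mat N n" and Xi: "Xi \<in> carrier_mat n m"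
    and eig: "\<forall>u<m. mu u \<noteq> 0 \<and> eigenvector (A * B) (col Xi u) (mu u)"
  shows "\<exists>W \<in> carrier_mat N m. Xi = A * W"
proof
  define W where "W = mat N m (\<lambda>(v,u). (B *\<^sub>v col Xi u) $ v / mu u)"
  show W: "W \<in> carrier_mat N m" unfolding W_def by simp
  show "Xi = A * W"
  proof (rule mat_col_eqI)
    fix u assume "u < dim_col (A * W)"
    then have u: "u < m" using W by simp
    have x: "col Xi u \<in> carrier_vec n" using Xi u by simp
    have mu: "mu u \<noteq> 0" and ev: "(A * B) *\<^sub>v col Xi u = mu u \<cdot>\<^sub>v col Xi u"
      using eig u unfolding eigenvector_def by auto
    have "col W u = (1 / mu u) \<cdot>\<^sub>v (B *\<^sub>v col Xi u)"
      using B u unfolding W_def by (intro eq_vecI) auto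
    then have "col (A * W) u = A *\<^sub>v ((1 / mu u) \<cdot>\<^sub>v (B *\<^sub>v col Xi u))"
      using col_mult2[OF A W u] by simp
    also have "\<dots> = (1 / mu u) \<cdot>\<^sub>v ((A * B) *\<^sub>v col Xi u)"
      using A B x by (simp add: mult_mat_vec[OF A])
    also have "\<dots> = col Xi u" using ev mu by (simp add: smult_smult_assoc)
    finally show "col Xi u = col (A * W) u" by simp
  qed (use A Xi W in simp_all)
qed

lemma orthonormal_factor_gram_inverse:
  fixes A :: "'a::field mat"
  assumes A: "A \<in> carrier_mat n N" and W: "W \<in> carrier_mat N N"
    and orth: "(A * W)\<^sup>T * (A * W) = 1\<^sub>m N"
  shows "(A\<^sup>T * A) * (W * W\<^sup>T) = 1\<^sub>m N" "(W * W\<^sup>T) * (A\<^sup>T * A) = 1\<^sub>m N"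
proof -
  have At: "A\<^sup>T \<in> carrier_mat N n" and Wt: "W\<^sup>T \<in> carrier_mat N N" using A W by auto
  have "W\<^sup>T * ((A\<^sup>T * A) * W) = W\<^sup>T * (A\<^sup>T * (A * W))"
    using At A W by (simp add: assoc_mult_mat)
  also have "\<dots> = (W\<^sup>T * A\<^sup>T) * (A * W)"
    using Wt At A W by (simp add: assoc_mult_mat[of _ N N _ n _ N])
  also have "\<dots> = (A * W)\<^sup>T * (A * W)" by (simp add: transpose_mult[OF A W])
  finally have "W\<^sup>T * ((A\<^sup>T * A) * W) = 1\<^sub>m N" using orth by simp
  then have "((A\<^sup>T * A) * W) * W\<^sup>T = 1\<^sub>m N"
    by (rule mat_mult_left_right_inverse[OF Wt mult_carrier_mat[OF mult_carrier_mat[OF At A] W]])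
  moreover have "(A\<^sup>T * A) * (W * W\<^sup>T) = ((A\<^sup>T * A) * W) * W\<^sup>T"
    by (rule assoc_mult_mat[symmetric, OF mult_carrier_mat[OF At A] W Wt])
  ultimately show AW: "(A\<^sup>T * A) * (W * W\<^sup>T) = 1\<^sub>m N" by simp
  show "(W * W\<^sup>T) * (A\<^sup>T * A) = 1\<^sub>m N"
    by (rule mat_mult_left_right_inverse[OF mult_carrier_mat[OF At A] mult_carrier_mat[OF W Wt] AW])
qed

lemma orthonormal_cols_gram:
  assumes Xi: "Xi \<in> carrier_mat n m"
    and orth: "\<forall>u<m. \<forall>v<m. col Xi u \<bullet> col Xi v = (if u = v then 1 else 0)"
  shows "Xi\<^sup>T * Xi = 1\<^sub>m m"
proof (rule eq_matI)
  fix u v assume "u < dim_row (1\<^sub>m m :: 'a mat)" "v < dim_col (1\<^sub>m m :: 'a mat)"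
  then show "(Xi\<^sup>T * Xi) $$ (u,v) = 1\<^sub>m m $$ (u,v)" using Xi orth by simp
qed (use Xi in simp_all)

subsection \<open>Block matrices indexed by pairs\<close>

lemma sum_lessThan_mult_split:
  fixes m K :: nat
  shows "(\<Sum>v<m*K. f v) = (\<Sum>a<m. \<Sum>b<K. f (a*K+b))"
proof -
  have "(\<Sum>v<m*K. f v) = (\<Sum>a<m. sum f {a*K..<a*K+K})"
    using sum.nat_group[of f K m] by simp
  also have "\<dots> = (\<Sum>a<m. \<Sum>b<K. f (a*K+b))"
  proof (rule sum.cong[OF refl])
    fix a
    have "sum f {a*K..<a*K+K} = sum f {0+a*K..<K+a*K}" by (simp add: add.commute)
    also have "\<dots> = (\<Sum>b=0..<K. f (b + a*K))" by (rule sum.shift_bounds_nat_ivl)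
    finally show "sum f {a*K..<a*K+K} = (\<Sum>b<K. f (a*K+b))"
      by (simp add: atLeast0LessThan add.commute)
  qed
  finally show ?thesis .
qed

lemma pair_index_less:
  fixes a b K :: nat
  assumes "a < K" "b < K"
  shows "a*K + b < K*K"
proof -
  have "a*K + b < (a+1)*K" using assms(2) by simp
  also have "\<dots> \<le> K*K" using assms(1) by (intro mult_le_mono1) simp
  finally show ?thesis .
qed

lemma pair_index_eq_iff:
  fixes a b a' b' K :: nat
  assumes "b < K" "b' < K"
  shows "a*K + b = a'*K + b' \<longleftrightarrow> a = a' \<and> b = b'"
proof
  assume eq: "a*K + b = a'*K + b'"
  have "a = (a*K + b) div K" "a' = (a'*K + b') div K" using assms by simp_all
  moreover have "b = (a*K + b) mod K" "b' = (a'*K + b') mod K" using assms by simp_all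
  ultimately show "a = a' \<and> b = b'" using eq by metis
qed simp

definition sub_block :: "nat \<Rightarrow> 'a mat \<Rightarrow> nat \<Rightarrow> nat \<Rightarrow> 'a mat" where
  "sub_block K M k m = mat K K (\<lambda>(l,l'). M $$ (k*K+l, m*K+l'))"

definition row_block :: "nat \<Rightarrow> 'a mat \<Rightarrow> nat \<Rightarrow> 'a mat" where
  "row_block K M k = mat K (dim_col M) (\<lambda>(l,u). M $$ (k*K+l, u))"

definition block_diagonal :: "nat \<Rightarrow> 'a::zero mat \<Rightarrow> bool" where
  "block_diagonal K D \<longleftrightarrow> (\<forall>k<K. \<forall>m<K. k \<noteq> m \<longrightarrow> sub_block K D k m = 0\<^sub>m K K)"

lemma sub_block_carrier [simp]: "sub_block K M k m \<in> carrier_mat K K"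
  by (simp add: sub_block_def)

lemma row_block_carrier [simp]: "row_block K M k \<in> carrier_mat K (dim_col M)"
  by (simp add: row_block_def)

lemma index_sub_block_mult:
  fixes X Y :: "'a::comm_semiring_0 mat"
  assumes X: "X \<in> carrier_mat (K*K) (K*K)" and Y: "Y \<in> carrier_mat (K*K) (K*K)"
    and k: "k < K" and m: "m < K" and l: "l < K" and l': "l' < K"
  shows "sub_block K (X * Y) k m $$ (l,l')
       = (\<Sum>a<K. \<Sum>b<K. sub_block K X k a $$ (l,b) * sub_block K Y a m $$ (b,l'))"
proof -
  have "sub_block K (X * Y) k m $$ (l,l') = (X * Y) $$ (k*K+l, m*K+l')"
    using l l' by (simp add: sub_block_def)
  also have "\<dots> = (\<Sum>v<K*K. X $$ (k*K+l, v) * Y $$ (v, m*K+l'))"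
    by (rule index_mult_mat_lessThan[OF X Y pair_index_less[OF k l] pair_index_less[OF m l']])
  also have "\<dots> = (\<Sum>a<K. \<Sum>b<K. X $$ (k*K+l, a*K+b) * Y $$ (a*K+b, m*K+l'))"
    by (rule sum_lessThan_mult_split)
  also have "\<dots> = (\<Sum>a<K. \<Sum>b<K. sub_block K X k a $$ (l,b) * sub_block K Y a m $$ (b,l'))"
    using l l' by (intro sum.cong refl) (simp add: sub_block_def)
  finally show ?thesis .
qed

lemma sub_block_mult_block_diagonal_left:
  fixes X Y :: "'a::comm_semiring_0 mat"
  assumes X: "X \<in> carrier_mat (K*K) (K*K)" and Y: "Y \<in> carrier_mat (K*K) (K*K)"
    and diag: "block_diagonal K X" and k: "k < K" and m: "m < K"
  shows "sub_block K (X * Y) k m = sub_block K X k k * sub_block K Y k m"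
proof (rule eq_matI)
  fix l l' assume "l < dim_row (sub_block K X k k * sub_block K Y k m)"
    "l' < dim_col (sub_block K X k k * sub_block K Y k m)"
  then have l: "l < K" and l': "l' < K" by (simp_all add: sub_block_def)
  have off: "sub_block K X k a $$ (l,b) = 0" if "a < K" "a \<noteq> k" "b < K" for a b
    using diag k that l unfolding block_diagonal_def by auto
  have "sub_block K (X * Y) k m $$ (l,l')
      = (\<Sum>a<K. \<Sum>b<K. sub_block K X k a $$ (l,b) * sub_block K Y a m $$ (b,l'))"
    by (rule index_sub_block_mult[OF X Y k m l l'])
  also have "\<dots> = (\<Sum>b<K. sub_block K X k k $$ (l,b) * sub_block K Y k m $$ (b,l'))"
    using k off by (subst sum.remove[of _ k]) (auto intro!: sum.neutral)
  also have "\<dots> = (sub_block K X k k * sub_block K Y k m) $$ (l,l')"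
    by (rule index_mult_mat_lessThan[OF sub_block_carrier sub_block_carrier l l', symmetric])
  finally show "sub_block K (X * Y) k m $$ (l,l') = (sub_block K X k k * sub_block K Y k m) $$ (l,l')" .
qed (simp_all add: sub_block_def)

lemma sub_block_mult_block_diagonal_right:
  fixes X Y :: "'a::comm_semiring_0 mat"
  assumes X: "X \<in> carrier_mat (K*K) (K*K)" and Y: "Y \<in> carrier_mat (K*K) (K*K)"
    and diag: "block_diagonal K Y" and k: "k < K" and m: "m < K"
  shows "sub_block K (X * Y) k m = sub_block K X k m * sub_block K Y m m"
proof (rule eq_matI)
  fix l l' assume "l < dim_row (sub_block K X k m * sub_block K Y m m)"
    "l' < dim_col (sub_block K X k m * sub_block K Y m m)"
  then have l: "l < K" and l': "l' < K" by (simp_all add: sub_block_def)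
  have off: "sub_block K Y a m $$ (b,l') = 0" if "a < K" "a \<noteq> m" "b < K" for a b
    using diag m that l' unfolding block_diagonal_def by auto
  have "sub_block K (X * Y) k m $$ (l,l')
      = (\<Sum>a<K. \<Sum>b<K. sub_block K X k a $$ (l,b) * sub_block K Y a m $$ (b,l'))"
    by (rule index_sub_block_mult[OF X Y k m l l'])
  also have "\<dots> = (\<Sum>b<K. sub_block K X k m $$ (l,b) * sub_block K Y m m $$ (b,l'))"
    using m off by (subst sum.remove[of _ m]) (auto intro!: sum.neutral)
  also have "\<dots> = (sub_block K X k m * sub_block K Y m m) $$ (l,l')"
    by (rule index_mult_mat_lessThan[OF sub_block_carrier sub_block_carrier l l', symmetric])
  finally show "sub_block K (X * Y) k m $$ (l,l') = (sub_block K X k m * sub_block K Y m m) $$ (l,l')" .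
qed (simp_all add: sub_block_def)

lemma sub_block_one_mat:
  assumes "k < K" "m < K"
  shows "sub_block K (1\<^sub>m (K*K)) k m = (if k = m then 1\<^sub>m K else 0\<^sub>m K K)"
proof (rule eq_matI)
  fix l l' assume "l < dim_row (if k = m then 1\<^sub>m K else 0\<^sub>m K K :: 'a mat)"
    "l' < dim_col (if k = m then 1\<^sub>m K else 0\<^sub>m K K :: 'a mat)"
  then have l: "l < K" and l': "l' < K" by (simp_all split: if_splits)
  show "sub_block K (1\<^sub>m (K*K)) k m $$ (l,l')
      = (if k = m then 1\<^sub>m K else 0\<^sub>m K K :: 'a mat) $$ (l,l')"
    using assms l l' pair_index_less pair_index_eq_iff[OF l l'] by (simp add: sub_block_def)
qed (simp_all add: sub_block_def)

lemma block_diagonal_inverse: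
  fixes D G :: "'a::comm_ring_1 mat"
  assumes D: "D \<in> carrier_mat (K*K) (K*K)" and G: "G \<in> carrier_mat (K*K) (K*K)"
    and diag: "block_diagonal K D" and DG: "D * G = 1\<^sub>m (K*K)" and GD: "G * D = 1\<^sub>m (K*K)"
  shows "block_diagonal K G"
    and "k < K \<Longrightarrow> inverts_mat (sub_block K D k k) (sub_block K G k k)"
    and "k < K \<Longrightarrow> inverts_mat (sub_block K G k k) (sub_block K D k k)"
proof -
  have left: "sub_block K D k k * sub_block K G k m = (if k = m then 1\<^sub>m K else 0\<^sub>m K K)"
    if "k < K" "m < K" for k m
  proof -
    have "sub_block K D k k * sub_block K G k m = sub_block K (D * G) k m"
      by (rule sub_block_mult_block_diagonal_left[OF D G diag that, symmetric])
    then show ?thesis using DG sub_block_one_mat[OF that] by simp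
  qed
  have right: "sub_block K G k m * sub_block K D m m = (if k = m then 1\<^sub>m K else 0\<^sub>m K K)"
    if "k < K" "m < K" for k m
  proof -
    have "sub_block K G k m * sub_block K D m m = sub_block K (G * D) k m"
      by (rule sub_block_mult_block_diagonal_right[OF G D diag that, symmetric])
    then show ?thesis using GD sub_block_one_mat[OF that] by simp
  qed
  show "block_diagonal K G" unfolding block_diagonal_def
  proof (intro allI impI)
    fix k m assume k: "k < K" and m: "m < K" and km: "k \<noteq> m"
    let ?D = "sub_block K D k k" and ?Gkk = "sub_block K G k k" and ?Gkm = "sub_block K G k m"
    have "?Gkm = (?Gkk * ?D) * ?Gkm"
      using right[OF k k] by (simp add: left_mult_one_mat[OF sub_block_carrier])
    also have "\<dots> = ?Gkk * (?D * ?Gkm)"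
      by (rule assoc_mult_mat[OF sub_block_carrier sub_block_carrier sub_block_carrier])
    also have "\<dots> = 0\<^sub>m K K"
      using left[OF k m] km by (simp add: right_mult_zero_mat[OF sub_block_carrier])
    finally show "?Gkm = 0\<^sub>m K K" .
  qed
  show "inverts_mat (sub_block K D k k) (sub_block K G k k)" if "k < K"
    using left[OF that that] unfolding inverts_mat_def by (simp add: sub_block_def)
  show "inverts_mat (sub_block K G k k) (sub_block K D k k)" if "k < K"
    using right[OF that that] unfolding inverts_mat_def by (simp add: sub_block_def)
qed

lemma sub_block_mult_transpose:
  fixes X Y :: "'a::comm_semiring_0 mat"
  assumes X: "X \<in> carrier_mat (K*K) n" and Y: "Y \<in> carrier_mat (K*K) n" and k: "k < K" and m: "m < K"
  shows "sub_block K (X * Y\<^sup>T) k m = row_block K X k * (row_block K Y m)\<^sup>T"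
proof (rule eq_matI)
  fix l l' assume "l < dim_row (row_block K X k * (row_block K Y m)\<^sup>T)"
    "l' < dim_col (row_block K X k * (row_block K Y m)\<^sup>T)"
  then have l: "l < K" and l': "l' < K" by (simp_all add: row_block_def)
  have Yt: "Y\<^sup>T \<in> carrier_mat n (K*K)" using Y by simp
  have "sub_block K (X * Y\<^sup>T) k m $$ (l,l') = (X * Y\<^sup>T) $$ (k*K+l, m*K+l')"
    using l l' by (simp add: sub_block_def)
  also have "\<dots> = (\<Sum>u<n. X $$ (k*K+l, u) * Y\<^sup>T $$ (u, m*K+l'))"
    by (rule index_mult_mat_lessThan[OF X Yt pair_index_less[OF k l] pair_index_less[OF m l']])
  also have "\<dots> = (\<Sum>u<n. row_block K X k $$ (l,u) * (row_block K Y m)\<^sup>T $$ (u,l'))"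
    using X Y l l' pair_index_less[OF m l'] by (intro sum.cong refl) (simp add: row_block_def)
  also have "\<dots> = (row_block K X k * (row_block K Y m)\<^sup>T) $$ (l,l')"
    using X Y l l' by (intro index_mult_mat_lessThan[symmetric]) (auto simp: row_block_def)
  finally show "sub_block K (X * Y\<^sup>T) k m $$ (l,l') = (row_block K X k * (row_block K Y m)\<^sup>T) $$ (l,l')" .
qed (simp_all add: sub_block_def row_block_def)

subsection \<open>Factorization of the PABM probability matrix\<close>

definition pabm_lift :: "nat \<Rightarrow> nat \<Rightarrow> (nat \<Rightarrow> nat) \<Rightarrow> real mat \<Rightarrow> real mat" where
  "pabm_lift n K c Lam = mat n (K*K) (\<lambda>(i,v). if c i = v div K then Lam $$ (i, v mod K) else 0)"

lemma pabm_lift_carrier [simp]: "pabm_lift n K c Lam \<in> carrier_mat n (K*K)"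
  by (simp add: pabm_lift_def)

lemma index_pabm_lift:
  assumes "i < n" "a < K" "b < K"
  shows "pabm_lift n K c Lam $$ (i, a*K+b) = (if c i = a then Lam $$ (i,b) else 0)"
  using assms pair_index_less[OF assms(2,3)] by (simp add: pabm_lift_def)

lemma pabm_Theta_factor:
  assumes c: "\<forall>i<n. c i < K"
  shows "\<exists>B \<in> carrier_mat (K*K) n. pabm_Theta n c Lam = pabm_lift n K c Lam * B"
proof
  let ?A = "pabm_lift n K c Lam"
  define B where "B = mat (K*K) n (\<lambda>(v,j). if c j = v mod K then Lam $$ (j, v div K) else 0)"
  show B: "B \<in> carrier_mat (K*K) n" by (simp add: B_def)
  show "pabm_Theta n c Lam = ?A * B"
  proof (rule eq_matI)
    fix i j assume "i < dim_row (?A * B)" "j < dim_col (?A * B)"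
    then have i: "i < n" and j: "j < n" using B by (simp_all add: pabm_lift_def)
    have B_index: "B $$ (a*K+b, j) = (if c j = b then Lam $$ (j,a) else 0)" if "a < K" "b < K" for a b
      using that j pair_index_less[OF that] by (simp add: B_def)
    have "(?A * B) $$ (i,j) = (\<Sum>v<K*K. ?A $$ (i,v) * B $$ (v,j))"
      by (rule index_mult_mat_lessThan[OF pabm_lift_carrier B i j])
    also have "\<dots> = (\<Sum>a<K. \<Sum>b<K. ?A $$ (i,a*K+b) * B $$ (a*K+b,j))"
      by (rule sum_lessThan_mult_split)
    also have "\<dots> = (\<Sum>a<K. if a = c i then Lam $$ (i, c j) * Lam $$ (j,a) else 0)"
    proof (rule sum.cong[OF refl])
      fix a assume "a \<in> {..<K}"
      then have "(\<Sum>b<K. ?A $$ (i,a*K+b) * B $$ (a*K+b,j))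
          = (\<Sum>b<K. if b = c j then (if a = c i then Lam $$ (i,b) * Lam $$ (j,a) else 0) else 0)"
        using i by (intro sum.cong refl) (auto simp: index_pabm_lift B_index)
      also have "\<dots> = (if a = c i then Lam $$ (i, c j) * Lam $$ (j,a) else 0)"
        using c j by simp
      finally show "(\<Sum>b<K. ?A $$ (i,a*K+b) * B $$ (a*K+b,j))
          = (if a = c i then Lam $$ (i, c j) * Lam $$ (j,a) else 0)" .
    qed
    also have "\<dots> = Lam $$ (i, c j) * Lam $$ (j, c i)" using c i by simp
    finally show "pabm_Theta n c Lam $$ (i,j) = (?A * B) $$ (i,j)"
      using i j by (simp add: pabm_Theta_def)
  qed (use B in \<open>simp_all add: pabm_Theta_def pabm_lift_def\<close>)
qed

lemma index_pabm_lift_gram: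
  assumes k: "k < K" and m: "m < K" and l: "l < K" and l': "l' < K"
  shows "((pabm_lift n K c Lam)\<^sup>T * pabm_lift n K c Lam) $$ (k*K+l, m*K+l')
       = (if k = m then (\<Sum>i | i<n \<and> i \<in> {i. c i = k}. Lam $$ (i,l) * Lam $$ (i,l')) else 0)"
proof -
  let ?A = "pabm_lift n K c Lam"
  have "(?A\<^sup>T * ?A) $$ (k*K+l, m*K+l') = (\<Sum>i<n. ?A\<^sup>T $$ (k*K+l, i) * ?A $$ (i, m*K+l'))"
    by (rule index_mult_mat_lessThan[OF transpose_carrier_mat[THEN iffD2, OF pabm_lift_carrier]
          pabm_lift_carrier pair_index_less[OF k l] pair_index_less[OF m l']])
  also have "\<dots> = (\<Sum>i<n. if c i = k \<and> k = m then Lam $$ (i,l) * Lam $$ (i,l') else 0)"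
  proof (rule sum.cong[OF refl])
    fix i assume "i \<in> {..<n}"
    then have i: "i < n" by simp
    have "?A\<^sup>T $$ (k*K+l, i) = ?A $$ (i, k*K+l)"
      using i pair_index_less[OF k l] by (simp add: pabm_lift_def)
    then show "?A\<^sup>T $$ (k*K+l, i) * ?A $$ (i, m*K+l')
        = (if c i = k \<and> k = m then Lam $$ (i,l) * Lam $$ (i,l') else 0)"
      by (auto simp: index_pabm_lift[OF i k l] index_pabm_lift[OF i m l'])
  qed
  also have "\<dots> = (if k = m then (\<Sum>i | i<n \<and> i \<in> {i. c i = k}. Lam $$ (i,l) * Lam $$ (i,l'))
                    else 0)"
  proof (cases "k = m")
    case True
    have "{i \<in> {..<n}. c i = m} = {i. i<n \<and> i \<in> {i. c i = m}}" by auto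
    then show ?thesis
      unfolding True
      using sum.inter_filter[of "{..<n}" "\<lambda>i. Lam $$ (i,l) * Lam $$ (i,l')" "\<lambda>i. c i = m"]
      by simp
  qed simp
  finally show ?thesis .
qed

lemma pabm_lift_gram_sub_block:
  assumes Lam: "Lam \<in> carrier_mat n K" and k: "k < K" and m: "m < K"
  shows "sub_block K ((pabm_lift n K c Lam)\<^sup>T * pabm_lift n K c Lam) k m
       = (if k = m then (submatrix Lam {i. c i = k} {0..<K})\<^sup>T * submatrix Lam {i. c i = k} {0..<K}
          else 0\<^sub>m K K)"
    (is "?lhs = (if k = m then ?Gram else _)")
proof (rule eq_matI)
  have "?Gram \<in> carrier_mat K K" using submatrix_rows_carrier[OF Lam, of "{i. c i = k}"] by simp
  then have rhs: "(if k = m then ?Gram else 0\<^sub>m K K) \<in> carrier_mat K K"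
    by (cases "k = m") simp_all
  show "dim_row ?lhs = dim_row (if k = m then ?Gram else 0\<^sub>m K K)"
    "dim_col ?lhs = dim_col (if k = m then ?Gram else 0\<^sub>m K K)"
    using rhs sub_block_carrier[of K "(pabm_lift n K c Lam)\<^sup>T * pabm_lift n K c Lam" k m]
    by (simp_all only: carrier_matD)
  fix l l' assume "l < dim_row (if k = m then ?Gram else 0\<^sub>m K K)"
    "l' < dim_col (if k = m then ?Gram else 0\<^sub>m K K)"
  then have l: "l < K" and l': "l' < K" using rhs by (simp_all only: carrier_matD)
  have "?lhs $$ (l,l')
      = (if k = m then (\<Sum>i | i<n \<and> i \<in> {i. c i = k}. Lam $$ (i,l) * Lam $$ (i,l')) else 0)"
    using l l' index_pabm_lift_gram[OF k m l l'] by (simp add: sub_block_def)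
  also have "\<dots> = (if k = m then ?Gram else 0\<^sub>m K K) $$ (l,l')"
    using l l' by (simp only: submatrix_rows_gram_index[OF Lam l l'] if_distrib[of "\<lambda>M. M $$ (l,l')"]
        index_zero_mat)
  finally show "?lhs $$ (l,l') = (if k = m then ?Gram else 0\<^sub>m K K) $$ (l,l')" .
qed

lemma pabm_eigenbasis_factor:
  fixes Xi :: "real mat"
  assumes c: "\<forall>i<n. c i < K" and Xi: "Xi \<in> carrier_mat n (K*K)"
    and orth: "\<forall>u<K*K. \<forall>v<K*K. col Xi u \<bullet> col Xi v = (if u = v then 1 else 0)"
    and eig: "\<forall>u<K*K. mu u \<noteq> 0 \<and> eigenvector (pabm_Theta n c Lam) (col Xi u) (mu u)"
  obtains W where "W \<in> carrier_mat (K*K) (K*K)" and "Xi = pabm_lift n K c Lam * W"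
    and "((pabm_lift n K c Lam)\<^sup>T * pabm_lift n K c Lam) * (W * W\<^sup>T) = 1\<^sub>m (K*K)"
    and "(W * W\<^sup>T) * ((pabm_lift n K c Lam)\<^sup>T * pabm_lift n K c Lam) = 1\<^sub>m (K*K)"
proof -
  let ?A = "pabm_lift n K c Lam"
  obtain B where B: "B \<in> carrier_mat (K*K) n" and Theta: "pabm_Theta n c Lam = ?A * B"
    using pabm_Theta_factor[OF c] by blast
  have "\<forall>u<K*K. mu u \<noteq> 0 \<and> eigenvector (?A * B) (col Xi u) (mu u)"
    using eig Theta by simp
  then obtain W where W: "W \<in> carrier_mat (K*K) (K*K)" and Xi_AW: "Xi = ?A * W"
    using nonzero_eigenvectors_factor_left[OF pabm_lift_carrier B Xi] by blast
  have "(?A * W)\<^sup>T * (?A * W) = 1\<^sub>m (K*K)"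
    using orthonormal_cols_gram[OF Xi orth, unfolded Xi_AW] .
  from orthonormal_factor_gram_inverse[OF pabm_lift_carrier W this] show ?thesis
    by (rule that[OF W Xi_AW])
qed

lemma submatrix_pabm_lift_mult:
  assumes Lam: "Lam \<in> carrier_mat n K" and W: "W \<in> carrier_mat (K*K) m" and k: "k < K"
  shows "submatrix (pabm_lift n K c Lam * W) {i. c i = k} {0..<m}
       = submatrix Lam {i. c i = k} {0..<K} * row_block K W k"
proof (rule eq_matI)
  let ?A = "pabm_lift n K c Lam" and ?I = "{i. c i = k}"
  let ?L = "submatrix Lam ?I {0..<K}" and ?Z = "row_block K W k"
  have AW: "?A * W \<in> carrier_mat n m" by (rule mult_carrier_mat[OF pabm_lift_carrier W])
  have L: "?L \<in> carrier_mat (card {i. i<n \<and> i\<in>?I}) K" by (rule submatrix_rows_carrier[OF Lam])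
  have Z: "?Z \<in> carrier_mat K m" using W row_block_carrier[of K W k] by simp
  show "dim_row (submatrix (?A * W) ?I {0..<m}) = dim_row (?L * ?Z)"
    "dim_col (submatrix (?A * W) ?I {0..<m}) = dim_col (?L * ?Z)"
    using submatrix_rows_carrier[OF AW, of ?I] L Z by simp_all
  fix r u assume "r < dim_row (?L * ?Z)" "u < dim_col (?L * ?Z)"
  then have r: "r < card {i. i<n \<and> i\<in>?I}" and u: "u < m" using L Z by simp_all
  define p where "p = pick ?I r"
  have p: "p < n" "c p = k" using pick_in_bounded_set[OF r] unfolding p_def by simp_all
  have "submatrix (?A * W) ?I {0..<m} $$ (r,u) = (?A * W) $$ (p,u)"
    unfolding p_def by (rule submatrix_rows_index[OF AW r u])
  also have "\<dots> = (\<Sum>v<K*K. ?A $$ (p,v) * W $$ (v,u))"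
    by (rule index_mult_mat_lessThan[OF pabm_lift_carrier W p(1) u])
  also have "\<dots> = (\<Sum>a<K. \<Sum>b<K. ?A $$ (p,a*K+b) * W $$ (a*K+b,u))"
    by (rule sum_lessThan_mult_split)
  also have "\<dots> = (\<Sum>a<K. if a = k then (\<Sum>b<K. Lam $$ (p,b) * W $$ (k*K+b,u)) else 0)"
    using p by (intro sum.cong refl) (auto simp: index_pabm_lift)
  also have "\<dots> = (\<Sum>b<K. ?L $$ (r,b) * ?Z $$ (b,u))"
    using k u W by (simp add: submatrix_rows_index[OF Lam r] row_block_def p_def)
  also have "\<dots> = (?L * ?Z) $$ (r,u)"
    by (rule index_mult_mat_lessThan[OF L Z r u, symmetric])
  finally show "submatrix (?A * W) ?I {0..<m} $$ (r,u) = (?L * ?Z) $$ (r,u)" .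
qed

theorem proposition1:
  fixes n K :: nat and c :: "nat \<Rightarrow> nat" and Lam Xi :: "real mat" and mu :: "nat \<Rightarrow> real"
  assumes K2: "K \<ge> 2"
    and c_range: "\<forall>i<n. c i < K"
    and Lam_dim: "Lam \<in> carrier_mat n K"
    and Lam_range: "\<forall>i<n. \<forall>l<K. 0 \<le> Lam $$ (i,l) \<and> Lam $$ (i,l) \<le> 1"
    and rank: "mat_rank n (pabm_Theta n c Lam) = K^2"
    and Xi_dim: "Xi \<in> carrier_mat n (K^2)"
    and Xi_orth: "\<forall>u<K^2. \<forall>v<K^2. col Xi u \<bullet> col Xi v = (if u = v then 1 else 0)"
    and Xi_eig: "\<forall>u<K^2. mu u \<noteq> 0 \<and> eigenvector (pabm_Theta n c Lam) (col Xi u) (mu u)"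
  shows "\<exists>Z :: nat \<Rightarrow> real mat. \<forall>k<K.
           Z k \<in> carrier_mat K (K^2)
         \<and> submatrix Xi {i. c i = k} {0..<K^2} = submatrix Lam {i. c i = k} {0..<K} * Z k
         \<and> (\<forall>l<K. l \<noteq> k \<longrightarrow> Z k * (Z l)\<^sup>T = 0\<^sub>m K K)
         \<and> inverts_mat (Z k * (Z k)\<^sup>T) ((submatrix Lam {i. c i = k} {0..<K})\<^sup>T * submatrix Lam {i. c i = k} {0..<K})
         \<and> inverts_mat ((submatrix Lam {i. c i = k} {0..<K})\<^sup>T * submatrix Lam {i. c i = k} {0..<K}) (Z k * (Z k)\<^sup>T)"
proof -
  let ?A = "pabm_lift n K c Lam"
  have KK: "K^2 = K*K" by (simp add: power2_eq_square)
  obtain W where W: "W \<in> carrier_mat (K*K) (K*K)" and Xi_AW: "Xi = ?A * W"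
    and gram_inv: "(?A\<^sup>T * ?A) * (W * W\<^sup>T) = 1\<^sub>m (K*K)"
      "(W * W\<^sup>T) * (?A\<^sup>T * ?A) = 1\<^sub>m (K*K)"
    by (rule pabm_eigenbasis_factor[OF c_range Xi_dim[unfolded KK] Xi_orth[unfolded KK]
          Xi_eig[unfolded KK]])
  have AtA: "?A\<^sup>T * ?A \<in> carrier_mat (K*K) (K*K)"
    using transpose_carrier_mat[THEN iffD2, OF pabm_lift_carrier] by (rule mult_carrier_mat) simp
  have "block_diagonal K (?A\<^sup>T * ?A)"
    unfolding block_diagonal_def using pabm_lift_gram_sub_block[OF Lam_dim] by simp
  note blocks = block_diagonal_inverse[OF AtA mult_carrier_mat[OF W transpose_carrier_mat[THEN iffD2, OF W]]
      this gram_inv]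
  show ?thesis
  proof (intro exI[of _ "row_block K W"] allI impI conjI)
    fix k assume k: "k < K"
    have ZZ: "row_block K W k * (row_block K W l)\<^sup>T = sub_block K (W * W\<^sup>T) k l" if "l < K" for l
      using sub_block_mult_transpose[OF W W k that] by simp
    have Gram: "(submatrix Lam {i. c i = k} {0..<K})\<^sup>T * submatrix Lam {i. c i = k} {0..<K}
        = sub_block K (?A\<^sup>T * ?A) k k"
      using pabm_lift_gram_sub_block[OF Lam_dim k k] by simp
    show "row_block K W k \<in> carrier_mat K (K^2)" using W KK row_block_carrier[of K W k] by simp
    show "submatrix Xi {i. c i = k} {0..<K^2} = submatrix Lam {i. c i = k} {0..<K} * row_block K W k"
      using submatrix_pabm_lift_mult[OF Lam_dim W k] Xi_AW KK by simp
    show "row_block K W k * (row_block K W l)\<^sup>T = 0\<^sub>m K K" if "l < K" "l \<noteq> k" for l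
      using blocks(1) that k unfolding ZZ[OF that(1)] block_diagonal_def by simp
    show "inverts_mat (row_block K W k * (row_block K W k)\<^sup>T)
        ((submatrix Lam {i. c i = k} {0..<K})\<^sup>T * submatrix Lam {i. c i = k} {0..<K})"
      unfolding ZZ[OF k] Gram by (rule blocks(3)[OF k])
    show "inverts_mat ((submatrix Lam {i. c i = k} {0..<K})\<^sup>T * submatrix Lam {i. c i = k} {0..<K})
        (row_block K W k * (row_block K W k)\<^sup>T)"
      unfolding ZZ[OF k] Gram by (rule blocks(2)[OF k])
  qed
qed

end
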